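(* Let $R$ be a finitely generated commutative ring which is reduced, equipped with a ring homomorphism $\alpha:R\to\mathbb{Z}$ and a regular element $r\in R$. Then there exists a finite subset $S\subset R$ such that $\mathcal{K}_r(x)=\mathcal{K}_r^S(x)$ for all $x\in R$.
   Context: An element $r\in R$ is regular if $\alpha(r)\neq 0$ and $x\cdot r=\alpha(x)r$ for all $x\in R$. The Knutson Index $\mathcal{K}_r(x)$ of $x\in R$ is the non-negative integer $m$ such that $Rx\cap\mathbb{Z}r=m\mathbb{Z}r$. For a subset $S\subseteq R$ and $x\in R$, let $S(x)=\{s\in S: s\cdot x\in\mathbb{Z}r\}$ and $\mathrm{Ind}(x)=\{m\in\mathbb{Z}: s\cdot x=m r \text{ for some } s\in S(x)\}$. The Knutson $S$-subindex is $\mathcal{K}_r^S(x)=\gcd(\mathrm{Ind}(x))$, and $\mathcal{K}_r^S(x)=\infty$ if $S(x)=\emptyset$. *)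

theory Defs
  imports Main "HOL-Library.Extended_Nat"
begin

inductive_set ring_generated :: "'a::comm_ring_1 set \<Rightarrow> 'a set" for G where
  gen: "g \<in> G \<Longrightarrow> g \<in> ring_generated G"
| one: "1 \<in> ring_generated G"
| add: "x \<in> ring_generated G \<Longrightarrow> y \<in> ring_generated G \<Longrightarrow> x + y \<in> ring_generated G"
| neg: "x \<in> ring_generated G \<Longrightarrow> - x \<in> ring_generated G"
| mult: "x \<in> ring_generated G \<Longrightarrow> y \<in> ring_generated G \<Longrightarrow> x * y \<in> ring_generated G"

definition finitely_generated_ring :: "'a::comm_ring_1 itself \<Rightarrow> bool" where
  "finitely_generated_ring _ \<longleftrightarrow> (\<exists>G::'a set. finite G \<and> ring_generated G = UNIV)"

definition reduced_ring :: "'a::comm_ring_1 itself \<Rightarrow> bool" where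
  "reduced_ring _ \<longleftrightarrow> (\<forall>(x::'a) (n::nat). x ^ n = 0 \<longrightarrow> x = 0)"

definition is_ring_hom_to_int :: "('a::comm_ring_1 \<Rightarrow> int) \<Rightarrow> bool" where
  "is_ring_hom_to_int \<alpha> \<longleftrightarrow> \<alpha> 1 = 1 \<and> (\<forall>x y. \<alpha> (x + y) = \<alpha> x + \<alpha> y) \<and> (\<forall>x y. \<alpha> (x * y) = \<alpha> x * \<alpha> y)"

definition regular_elem :: "('a::comm_ring_1 \<Rightarrow> int) \<Rightarrow> 'a \<Rightarrow> bool" where
  "regular_elem \<alpha> r \<longleftrightarrow> \<alpha> r \<noteq> 0 \<and> (\<forall>x. x * r = of_int (\<alpha> x) * r)"

definition int_multiples :: "'a::comm_ring_1 \<Rightarrow> 'a set" where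
  "int_multiples r = {of_int n * r | n. True}"

definition knutson_index :: "'a::comm_ring_1 \<Rightarrow> 'a \<Rightarrow> nat" where
  "knutson_index r x = (THE m::nat. {a * x | a. True} \<inter> int_multiples r = int_multiples (of_nat m * r))"

definition S_part :: "'a::comm_ring_1 set \<Rightarrow> 'a \<Rightarrow> 'a \<Rightarrow> 'a set" where
  "S_part S r x = {s \<in> S. s * x \<in> int_multiples r}"

definition Ind :: "'a::comm_ring_1 set \<Rightarrow> 'a \<Rightarrow> 'a \<Rightarrow> int set" where
  "Ind S r x = {m::int. \<exists>s \<in> S_part S r x. s * x = of_int m * r}"

definition knutson_subindex :: "'a::comm_ring_1 set \<Rightarrow> 'a \<Rightarrow> 'a \<Rightarrow> enat" where
  "knutson_subindex S r x =
     (if S_part S r x = {} then \<infinity> else enat (nat (Gcd (Ind S r x))))"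

end

theory Submission
  imports Defs
begin

text \<open>A finitely generated ring is Noetherian (Hilbert's basis theorem, adjoining one generator
  at a time). In a reduced Noetherian ring 0 is a finite intersection of primes Q_1, ..., Q_k, so
  every annihilator is the intersection of those Q_i not containing the annihilated set; hence
  there are only finitely many annihilators. For x \<in> R let J be the annihilator of x ker \<alpha>
  and t \<in> J with \<alpha>(t) generating \<alpha>(J). Elements annihilating ker \<alpha> are determined by
  their value under \<alpha>, since R is reduced. So from a x = K(x) r we get t k x = K(x) r, and
  for c = gcd(k, \<alpha>(r)) the element t c x is again an integer multiple of r, with multiplier
  dividing K(x), hence equal to \<plusminus>K(x). Thus S = {t_J c : J an annihilator, |c| \<le> |\<alpha>(r)|}
  works.\<close>

section \<open>Ideals and Noetherian rings\<close>

definition ideal_in :: "'a::comm_ring_1 set \<Rightarrow> 'a set \<Rightarrow> bool" where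
  "ideal_in A I \<longleftrightarrow> I \<subseteq> A \<and> 0 \<in> I \<and> (\<forall>x\<in>I. \<forall>y\<in>I. x + y \<in> I) \<and> (\<forall>a\<in>A. \<forall>x\<in>I. a * x \<in> I)"

definition noetherian :: "'a::comm_ring_1 set \<Rightarrow> bool" where
  "noetherian A \<longleftrightarrow>
     (\<forall>F. F \<noteq> {} \<and> (\<forall>I\<in>F. ideal_in A I) \<longrightarrow> (\<exists>M\<in>F. \<forall>I\<in>F. M \<subseteq> I \<longrightarrow> I = M))"

lemma noetherianD:
  assumes "noetherian A" "F \<noteq> {}" "\<And>I. I \<in> F \<Longrightarrow> ideal_in A I"
  shows "\<exists>M\<in>F. \<forall>I\<in>F. M \<subseteq> I \<longrightarrow> I = M"
  using assms unfolding noetherian_def by simp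

lemma ideal_in_diff:
  assumes "ideal_in A I" "-1 \<in> A" "x \<in> I" "y \<in> I"
  shows "x - y \<in> I"
proof -
  have "x + (-1) * y \<in> I" using assms unfolding ideal_in_def by blast
  then show ?thesis by simp
qed

lemma int_ideal_principal:
  assumes N: "ideal_in (UNIV :: int set) N"
  shows "\<exists>g\<ge>0. \<forall>n. n \<in> N \<longleftrightarrow> g dvd n"
proof (cases "N \<subseteq> {0}")
  case True
  then show ?thesis using N unfolding ideal_in_def by (intro exI[of _ 0]) auto
next
  case False
  then obtain x where x: "x \<in> N" "x \<noteq> 0" by auto
  have "sgn x * x \<in> N" using x N unfolding ideal_in_def by blast
  then have "\<bar>x\<bar> \<in> N" by (simp add: abs_sgn mult.commute)
  then have "int (nat \<bar>x\<bar>) \<in> N" by simp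
  then have ex: "\<exists>k::nat. k > 0 \<and> int k \<in> N" using x(2) by (intro exI[of _ "nat \<bar>x\<bar>"]) simp
  define k where "k = (LEAST k::nat. k > 0 \<and> int k \<in> N)"
  have k: "k > 0" "int k \<in> N" using LeastI_ex[OF ex] unfolding k_def by blast+
  have least: "k \<le> j" if "j > 0" "int j \<in> N" for j
    unfolding k_def by (rule Least_le) (use that in blast)
  have "int k dvd n" if n: "n \<in> N" for n
  proof -
    have "n - (n div int k) * int k \<in> N"
      using N n k(2) by (intro ideal_in_diff[where A = UNIV]) (auto simp: ideal_in_def)
    then have "n mod int k \<in> N" by (simp add: minus_div_mult_eq_mod)
    then have "int (nat (n mod int k)) \<in> N" using k(1) by simp
    moreover have "nat (n mod int k) < k" using k(1) by (simp add: nat_less_iff)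
    ultimately have "\<not> 0 < nat (n mod int k)" using least[of "nat (n mod int k)"] by force
    then have "n mod int k = 0" using k(1) pos_mod_sign[of "int k" n] by linarith
    then show ?thesis by (simp add: dvd_eq_mod_eq_0)
  qed
  moreover have "n \<in> N" if dvd: "int k dvd n" for n
  proof -
    obtain e where "n = e * int k" using dvd by (auto simp: dvd_def mult.commute)
    then show ?thesis using k(2) N unfolding ideal_in_def by blast
  qed
  ultimately show ?thesis by (intro exI[of _ "int k"]) auto
qed

lemma noetherian_int: "noetherian (UNIV :: int set)"
  unfolding noetherian_def
proof (intro allI impI)
  fix F :: "int set set"
  assume F: "F \<noteq> {} \<and> (\<forall>I\<in>F. ideal_in UNIV I)"
  then have "\<forall>I\<in>F. \<exists>g\<ge>0. \<forall>n. n \<in> I \<longleftrightarrow> g dvd n" using int_ideal_principal by blast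
  then obtain gen where gen: "\<And>I. I \<in> F \<Longrightarrow> gen I \<ge> 0"
    and mem: "\<And>I n. I \<in> F \<Longrightarrow> n \<in> I \<longleftrightarrow> gen I dvd n"
    by metis
  show "\<exists>M\<in>F. \<forall>I\<in>F. M \<subseteq> I \<longrightarrow> I = M"
  proof (cases "\<forall>I\<in>F. gen I = 0")
    case True
    then have "I = J" if "I \<in> F" "J \<in> F" for I J
      using mem that by (auto intro!: set_eqI)
    then show ?thesis using F by blast
  next
    case False
    then obtain M where M: "M \<in> F" "gen M \<noteq> 0"
      and least: "\<And>I. I \<in> F \<Longrightarrow> gen I \<noteq> 0 \<Longrightarrow> nat (gen M) \<le> nat (gen I)"
      using ex_has_least_nat[of "\<lambda>I. I \<in> F \<and> gen I \<noteq> 0" _ "\<lambda>I. nat (gen I)"] by blast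
    have "gen M > 0" using M gen[OF M(1)] by linarith
    show ?thesis
    proof (intro bexI[OF _ M(1)] ballI impI)
      fix I assume I: "I \<in> F" "M \<subseteq> I"
      have "gen M \<in> M" using mem[OF M(1)] by simp
      then have "gen I dvd gen M" using I mem by blast
      then have "gen I \<noteq> 0" "gen I \<le> gen M"
        using \<open>gen M > 0\<close> by (auto dest: zdvd_imp_le)
      then have "gen I = gen M" using least[OF I(1)] gen[OF I(1)] by linarith
      then show "I = M" using mem[OF I(1)] mem[OF M(1)] by (auto intro!: set_eqI)
    qed
  qed
qed

lemma ideal_in_vimage_of_int:
  assumes I: "ideal_in (range of_int) (I :: 'a::comm_ring_1 set)"
  shows "ideal_in UNIV (of_int -` I)"
  unfolding ideal_in_def
proof (intro conjI ballI)
  fix x y assume "x \<in> of_int -` I" "y \<in> of_int -` I"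
  then have "of_int x + of_int y \<in> I" using I unfolding ideal_in_def by blast
  then show "x + y \<in> of_int -` I" by simp
next
  fix a x assume "x \<in> of_int -` I"
  then have "of_int a * of_int x \<in> I" using I unfolding ideal_in_def by blast
  then show "a * x \<in> of_int -` I" by simp
qed (use I in \<open>simp_all add: ideal_in_def\<close>)

lemma noetherian_range_of_int: "noetherian (range (of_int :: int \<Rightarrow> 'a::comm_ring_1))"
  unfolding noetherian_def
proof (intro allI impI)
  fix F :: "'a set set"
  assume F: "F \<noteq> {} \<and> (\<forall>I\<in>F. ideal_in (range of_int) I)"
  have image_vimage: "of_int ` (of_int -` I) = I" if "I \<in> F" for I
    using F that unfolding ideal_in_def by (simp add: image_vimage_eq Int_absorb2)
  have "(\<lambda>I. of_int -` I) ` F \<noteq> {}" "\<And>N. N \<in> (\<lambda>I. of_int -` I) ` F \<Longrightarrow> ideal_in UNIV N"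
    using F ideal_in_vimage_of_int by auto
  from noetherianD[OF noetherian_int this] obtain N where N: "N \<in> (\<lambda>I. of_int -` I) ` F"
    and max: "\<forall>N'\<in>(\<lambda>I. of_int -` I) ` F. N \<subseteq> N' \<longrightarrow> N' = N"
    by (rule bexE)
  then obtain M where M: "M \<in> F" "N = of_int -` M" by blast
  show "\<exists>M\<in>F. \<forall>I\<in>F. M \<subseteq> I \<longrightarrow> I = M"
  proof (intro bexI[OF _ M(1)] ballI impI)
    fix I assume I: "I \<in> F" "M \<subseteq> I"
    have "N \<subseteq> of_int -` I" using I(2) M(2) by blast
    then have "of_int -` I = of_int -` M" using max I(1) M(2) by simp
    then show "I = M" using image_vimage[OF I(1)] image_vimage[OF M(1)] by simp
  qed
qed

lemma noetherian_stabilize: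
  fixes N :: nat
  assumes A: "noetherian A"
    and ideal: "\<And>I n. I \<in> F \<Longrightarrow> ideal_in A (L n I)"
    and mono: "\<And>I J n. I \<in> F \<Longrightarrow> J \<in> F \<Longrightarrow> I \<subseteq> J \<Longrightarrow> L n I \<subseteq> L n J"
    and "I0 \<in> F"
  shows "\<exists>I1\<in>F. I0 \<subseteq> I1 \<and> (\<forall>I\<in>F. I1 \<subseteq> I \<longrightarrow> (\<forall>n<N. L n I = L n I1))"
  using \<open>I0 \<in> F\<close>
proof (induction N arbitrary: I0)
  case 0
  then show ?case by auto
next
  case (Suc N)
  from Suc.IH[OF Suc.prems] obtain I1 where I1: "I1 \<in> F" "I0 \<subseteq> I1"
    and stable: "\<forall>I\<in>F. I1 \<subseteq> I \<longrightarrow> (\<forall>n<N. L n I = L n I1)"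
    by blast
  define G where "G = {L N I | I. I \<in> F \<and> I1 \<subseteq> I}"
  have "G \<noteq> {}" "\<And>L'. L' \<in> G \<Longrightarrow> ideal_in A L'"
    unfolding G_def using I1 ideal by blast+
  from noetherianD[OF A this] obtain M where M: "M \<in> G" and max: "\<forall>L'\<in>G. M \<subseteq> L' \<longrightarrow> L' = M"
    by (rule bexE)
  from M obtain I2 where I2: "I2 \<in> F" "I1 \<subseteq> I2" "M = L N I2" unfolding G_def by blast
  have "L n I = L n I2" if I: "I \<in> F" "I2 \<subseteq> I" and "n < Suc N" for I n
  proof (cases "n < N")
    case True
    then show ?thesis using stable I I2 by auto
  next
    case False
    then have "n = N" using \<open>n < Suc N\<close> by simp
    moreover have "L N I \<in> G" unfolding G_def using I I2 by auto
    moreover have "M \<subseteq> L N I" using I2 I mono by simp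
    ultimately show ?thesis using max I2(3) by simp
  qed
  then have "\<forall>I\<in>F. I2 \<subseteq> I \<longrightarrow> (\<forall>n<Suc N. L n I = L n I2)" by blast
  moreover have "I0 \<subseteq> I2" using I1(2) I2(2) by (rule subset_trans)
  ultimately show ?case using I2(1) by blast
qed

section \<open>Subrings and adjoining an element\<close>

definition subring :: "'a::comm_ring_1 set \<Rightarrow> bool" where
  "subring A \<longleftrightarrow> 1 \<in> A \<and> (\<forall>x\<in>A. \<forall>y\<in>A. x + y \<in> A \<and> x * y \<in> A) \<and> (\<forall>x\<in>A. -x \<in> A)"

lemma subring_zero: "subring A \<Longrightarrow> 0 \<in> A"
  unfolding subring_def by (metis add.right_inverse)

lemma subring_diff: "subring A \<Longrightarrow> x \<in> A \<Longrightarrow> y \<in> A \<Longrightarrow> x - y \<in> A"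
  unfolding subring_def by (metis diff_conv_add_uminus)

lemma subring_minus_one: "subring A \<Longrightarrow> -1 \<in> A"
  unfolding subring_def by blast

lemma set_map2_subset:
  assumes "set xs \<subseteq> A" "set ys \<subseteq> A" "\<And>x y. x \<in> A \<Longrightarrow> y \<in> A \<Longrightarrow> f x y \<in> A"
  shows "set (map2 f xs ys) \<subseteq> A"
proof
  fix z assume "z \<in> set (map2 f xs ys)"
  then obtain x y where xy: "(x, y) \<in> set (zip xs ys)" "z = f x y" by auto
  have "x \<in> A" "y \<in> A" using set_zip_leftD[OF xy(1)] set_zip_rightD[OF xy(1)] assms(1,2) by blast+
  then show "z \<in> A" using assms(3) xy(2) by blast
qed

fun horner :: "'a::comm_ring_1 \<Rightarrow> 'a list \<Rightarrow> 'a" where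
  "horner g [] = 0"
| "horner g (a # as) = a + g * horner g as"

lemma horner_append: "horner g (as @ [a]) = horner g as + a * g ^ length as"
  by (induction as) (auto simp: algebra_simps)

lemma horner_replicate_zero: "horner g (replicate n 0) = 0"
  by (induction n) auto

lemma horner_append_zeros: "horner g (as @ replicate n 0) = horner g as"
  by (induction as) (auto simp: horner_replicate_zero)

lemma horner_map2_add:
  "length as = length bs \<Longrightarrow> horner g (map2 (+) as bs) = horner g as + horner g bs"
  by (induction as bs rule: list_induct2) (auto simp: algebra_simps)

lemma horner_map2_diff:
  "length as = length bs \<Longrightarrow> horner g (map2 (-) as bs) = horner g as - horner g bs"
proof (induction as bs rule: list_induct2)
  case (Cons a as b bs)
  then have "horner g (map2 (-) (a # as) (b # bs)) = (a - b) + g * (horner g as - horner g bs)"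
    by simp
  then show ?case by (simp add: algebra_simps)
qed simp

lemma horner_scale: "horner g (map ((*) c) as) = c * horner g as"
  by (induction as) (auto simp: algebra_simps)

definition adjoin :: "'a::comm_ring_1 set \<Rightarrow> 'a \<Rightarrow> 'a set" where
  "adjoin A g = {horner g as | as. set as \<subseteq> A}"

lemma adjoinE:
  assumes "x \<in> adjoin A g"
  obtains as where "set as \<subseteq> A" "x = horner g as"
  using assms unfolding adjoin_def by blast

lemma adjoinI: "set as \<subseteq> A \<Longrightarrow> horner g as \<in> adjoin A g"
  unfolding adjoin_def by blast

lemma adjoin_base: "a \<in> A \<Longrightarrow> a \<in> adjoin A g"
  using adjoinI[of "[a]" A g] by simp

lemma adjoin_generator: "subring A \<Longrightarrow> g \<in> adjoin A g"
  using adjoinI[of "[0, 1]" A g] by (simp add: subring_zero subring_def)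

lemma adjoin_add:
  assumes A: "subring A" and x: "x \<in> adjoin A g" and y: "y \<in> adjoin A g"
  shows "x + y \<in> adjoin A g"
proof -
  obtain as bs where as: "set as \<subseteq> A" "x = horner g as" and bs: "set bs \<subseteq> A" "y = horner g bs"
    using x y by (metis adjoinE)
  define as' where "as' = as @ replicate (length bs - length as) 0"
  define bs' where "bs' = bs @ replicate (length as - length bs) 0"
  have "length as' = length bs'" unfolding as'_def bs'_def by simp
  then have "x + y = horner g (map2 (+) as' bs')"
    using as bs by (simp add: horner_map2_add as'_def bs'_def horner_append_zeros)
  moreover have "set (map2 (+) as' bs') \<subseteq> A"
    using as bs subring_zero[OF A] A unfolding as'_def bs'_def subring_def
    by (intro set_map2_subset) auto
  ultimately show ?thesis by (simp add: adjoinI)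
qed

lemma adjoin_scale:
  assumes A: "subring A" and c: "c \<in> A" and x: "x \<in> adjoin A g"
  shows "c * x \<in> adjoin A g"
proof -
  obtain as where as: "set as \<subseteq> A" "x = horner g as" using x by (rule adjoinE)
  have "set (map ((*) c) as) \<subseteq> A" using as c A unfolding subring_def by auto
  then show ?thesis using as by (metis adjoinI horner_scale)
qed

lemma adjoin_mult_generator:
  assumes A: "subring A" and x: "x \<in> adjoin A g"
  shows "g * x \<in> adjoin A g"
proof -
  obtain as where as: "set as \<subseteq> A" "x = horner g as" using x by (rule adjoinE)
  have "set (0 # as) \<subseteq> A" using as subring_zero[OF A] by simp
  then show ?thesis using as adjoinI[of "0 # as" A g] by simp
qed

lemma subring_adjoin:
  assumes A: "subring A"
  shows "subring (adjoin A g)"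
  unfolding subring_def
proof (intro conjI ballI)
  show "1 \<in> adjoin A g" using adjoin_base A unfolding subring_def by blast
next
  fix x y assume x: "x \<in> adjoin A g" and y: "y \<in> adjoin A g"
  show "x + y \<in> adjoin A g" using adjoin_add[OF A x y] .
  obtain as where as: "set as \<subseteq> A" "x = horner g as" using x by (rule adjoinE)
  have "horner g as * y \<in> adjoin A g"
    using as(1) by (induction as)
      (auto simp: distrib_right mult.assoc subring_zero[OF A] adjoin_base
        intro!: adjoin_add[OF A] adjoin_scale[OF A _ y] adjoin_mult_generator[OF A])
  then show "x * y \<in> adjoin A g" using as(2) by simp
next
  fix x assume "x \<in> adjoin A g"
  then show "-x \<in> adjoin A g" using adjoin_scale[OF A subring_minus_one[OF A]] by fastforce
qed

lemma adjoin_least: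
  assumes B: "subring B" and "A \<subseteq> B" and "g \<in> B"
  shows "adjoin A g \<subseteq> B"
proof
  fix x assume "x \<in> adjoin A g"
  then obtain as where as: "set as \<subseteq> A" "x = horner g as" by (rule adjoinE)
  have "horner g as \<in> B"
    using as(1) by (induction as) (use assms subring_zero[OF B] in \<open>auto simp: subring_def\<close>)
  then show "x \<in> B" using as by simp
qed

lemma subring_ring_generated: "subring (ring_generated G)"
  unfolding subring_def by (auto intro: ring_generated.intros)

lemma ring_generated_least: "subring B \<Longrightarrow> G \<subseteq> B \<Longrightarrow> ring_generated G \<subseteq> B"
proof
  fix x assume B: "subring B" "G \<subseteq> B" and "x \<in> ring_generated G"
  from this(3) show "x \<in> B"
    by (induction x rule: ring_generated.induct) (use B in \<open>auto simp: subring_def\<close>)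
qed

lemma ring_generated_insert: "ring_generated (insert g G) = adjoin (ring_generated G) g"
proof
  show "ring_generated (insert g G) \<subseteq> adjoin (ring_generated G) g"
    using adjoin_generator[OF subring_ring_generated] adjoin_base ring_generated.gen
    by (intro ring_generated_least subring_adjoin subring_ring_generated) blast
  show "adjoin (ring_generated G) g \<subseteq> ring_generated (insert g G)"
    by (intro adjoin_least subring_ring_generated ring_generated_least)
      (auto intro: ring_generated.gen)
qed

lemma of_int_in_subring: "subring A \<Longrightarrow> of_int n \<in> A"
proof -
  assume A: "subring A"
  have nat: "of_nat k \<in> A" for k
    by (induction k) (use A subring_zero[OF A] in \<open>auto simp: subring_def\<close>)
  have "of_int n = (of_nat (nat n) - of_nat (nat (- n)) :: 'a)" by (cases "n \<ge> 0") auto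
  then show ?thesis using subring_diff[OF A nat nat] by simp
qed

lemma ring_generated_empty: "ring_generated {} = range (of_int :: int \<Rightarrow> 'a::comm_ring_1)"
proof
  have "subring (range (of_int :: int \<Rightarrow> 'a))"
    unfolding subring_def by (auto simp flip: of_int_add of_int_mult of_int_minus) (metis of_int_1 rangeI)
  then show "ring_generated {} \<subseteq> range (of_int :: int \<Rightarrow> 'a)" by (simp add: ring_generated_least)
  show "range of_int \<subseteq> (ring_generated {} :: 'a set)"
    using of_int_in_subring[OF subring_ring_generated] by blast
qed

section \<open>Hilbert's basis theorem\<close>

context
  fixes A :: "'a::comm_ring_1 set" and g :: 'a
  assumes A: "subring A"
begin

definition lead_coeffs :: "nat \<Rightarrow> 'a set \<Rightarrow> 'a set" where
  "lead_coeffs n I = {a \<in> A. \<exists>as. set as \<subseteq> A \<and> length as = n \<and> a * g ^ n + horner g as \<in> I}"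

lemma lead_coeffsE:
  assumes "a \<in> lead_coeffs n I"
  obtains as where "a \<in> A" "set as \<subseteq> A" "length as = n" "a * g ^ n + horner g as \<in> I"
  using assms unfolding lead_coeffs_def by blast

lemma lead_coeffsI:
  "a \<in> A \<Longrightarrow> set as \<subseteq> A \<Longrightarrow> length as = n \<Longrightarrow> a * g ^ n + horner g as \<in> I \<Longrightarrow> a \<in> lead_coeffs n I"
  unfolding lead_coeffs_def by blast

lemma lead_coeffs_mono: "I \<subseteq> J \<Longrightarrow> lead_coeffs n I \<subseteq> lead_coeffs n J"
  unfolding lead_coeffs_def by blast

lemma ideal_lead_coeffs:
  assumes I: "ideal_in (adjoin A g) I"
  shows "ideal_in A (lead_coeffs n I)"
  unfolding ideal_in_def
proof (intro conjI ballI)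
  show "lead_coeffs n I \<subseteq> A" unfolding lead_coeffs_def by blast
  have "0 * g ^ n + horner g (replicate n 0) \<in> I"
    using I unfolding ideal_in_def by (simp add: horner_replicate_zero)
  then show "0 \<in> lead_coeffs n I"
    using subring_zero[OF A] by (intro lead_coeffsI[of 0 "replicate n 0"]) auto
next
  fix x y assume "x \<in> lead_coeffs n I" "y \<in> lead_coeffs n I"
  then obtain as bs where as: "x \<in> A" "set as \<subseteq> A" "length as = n" "x * g ^ n + horner g as \<in> I"
    and bs: "y \<in> A" "set bs \<subseteq> A" "length bs = n" "y * g ^ n + horner g bs \<in> I"
    by (metis lead_coeffsE)
  have "(x * g ^ n + horner g as) + (y * g ^ n + horner g bs) \<in> I"
    using as(4) bs(4) I unfolding ideal_in_def by blast
  moreover have "(x * g ^ n + horner g as) + (y * g ^ n + horner g bs)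
      = (x + y) * g ^ n + horner g (map2 (+) as bs)"
    using as(3) bs(3) by (simp add: horner_map2_add algebra_simps)
  moreover have "set (map2 (+) as bs) \<subseteq> A"
    using as(2) bs(2) A unfolding subring_def by (intro set_map2_subset) auto
  moreover have "x + y \<in> A" using as(1) bs(1) A unfolding subring_def by blast
  ultimately show "x + y \<in> lead_coeffs n I"
    using as(3) bs(3) by (intro lead_coeffsI[of _ "map2 (+) as bs"]) auto
next
  fix c x assume c: "c \<in> A" and x: "x \<in> lead_coeffs n I"
  from x obtain as where as: "x \<in> A" "set as \<subseteq> A" "length as = n" "x * g ^ n + horner g as \<in> I"
    by (rule lead_coeffsE)
  have "c * (x * g ^ n + horner g as) \<in> I"
    using as(4) I adjoin_base[OF c] unfolding ideal_in_def by blast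
  moreover have "c * (x * g ^ n + horner g as) = (c * x) * g ^ n + horner g (map ((*) c) as)"
    by (simp add: horner_scale algebra_simps)
  moreover have "set (map ((*) c) as) \<subseteq> A" using as(2) c A unfolding subring_def by auto
  moreover have "c * x \<in> A" using as(1) c A unfolding subring_def by blast
  ultimately show "c * x \<in> lead_coeffs n I"
    using as(3) by (intro lead_coeffsI[of _ "map ((*) c) as"]) auto
qed

lemma lead_coeffs_Suc:
  assumes I: "ideal_in (adjoin A g) I"
  shows "lead_coeffs n I \<subseteq> lead_coeffs (Suc n) I"
proof
  fix x assume "x \<in> lead_coeffs n I"
  then obtain as where as: "x \<in> A" "set as \<subseteq> A" "length as = n" "x * g ^ n + horner g as \<in> I"
    by (rule lead_coeffsE)
  have "g * (x * g ^ n + horner g as) \<in> I"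
    using as(4) I adjoin_generator[OF A] unfolding ideal_in_def by blast
  moreover have "g * (x * g ^ n + horner g as) = x * g ^ Suc n + horner g (0 # as)"
    by (simp add: algebra_simps)
  ultimately show "x \<in> lead_coeffs (Suc n) I"
    using as subring_zero[OF A] by (intro lead_coeffsI[of _ "0 # as"]) auto
qed

lemma lead_coeffs_mono_degree:
  assumes "ideal_in (adjoin A g) I" "n \<le> m"
  shows "lead_coeffs n I \<subseteq> lead_coeffs m I"
  using assms(2) by (induction m rule: dec_induct) (use lead_coeffs_Suc[OF assms(1)] in blast)+

text \<open>Subtracting an element of I with the same leading coefficient shortens the coefficient
  list.\<close>
lemma ideal_eq_of_lead_coeffs:
  assumes I: "ideal_in (adjoin A g) I" and J: "ideal_in (adjoin A g) J" and "I \<subseteq> J"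
    and lead: "\<And>n. lead_coeffs n J \<subseteq> lead_coeffs n I"
  shows "J \<subseteq> I"
proof -
  have "horner g as \<in> I" if "length as = n" "set as \<subseteq> A" "horner g as \<in> J" for n as
    using that
  proof (induction n arbitrary: as)
    case 0
    then show ?case using I unfolding ideal_in_def by simp
  next
    case (Suc n)
    then obtain bs a where as: "as = bs @ [a]" by (metis length_Suc_conv_rev)
    then have bs: "length bs = n" "set bs \<subseteq> A" "a \<in> A" using Suc.prems by auto
    have as_eq: "horner g as = a * g ^ n + horner g bs" using as bs(1) by (simp add: horner_append)
    have "a \<in> lead_coeffs n J" using bs Suc.prems(3) as_eq by (intro lead_coeffsI) auto
    then have "a \<in> lead_coeffs n I" using lead by blast
    then obtain cs where cs: "set cs \<subseteq> A" "length cs = n" "a * g ^ n + horner g cs \<in> I"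
      by (rule lead_coeffsE)
    have diff: "horner g as - (a * g ^ n + horner g cs) = horner g (map2 (-) bs cs)"
      using as_eq bs(1) cs(2) by (simp add: horner_map2_diff)
    have minus_one: "-1 \<in> adjoin A g" by (rule subring_minus_one[OF subring_adjoin[OF A]])
    have "a * g ^ n + horner g cs \<in> J" using cs(3) \<open>I \<subseteq> J\<close> by blast
    then have "horner g (map2 (-) bs cs) \<in> J"
      unfolding diff[symmetric] by (rule ideal_in_diff[OF J minus_one Suc.prems(3)])
    moreover have "set (map2 (-) bs cs) \<subseteq> A"
      using bs(2) cs(1) subring_diff[OF A] by (rule set_map2_subset)
    ultimately have "horner g (map2 (-) bs cs) \<in> I" using Suc.IH bs(1) cs(2) by simp
    then have "(a * g ^ n + horner g cs) + horner g (map2 (-) bs cs) \<in> I"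
      using cs(3) I unfolding ideal_in_def by blast
    then show ?case using diff by (simp add: algebra_simps)
  qed
  then show ?thesis using J unfolding ideal_in_def by (metis adjoinE subsetI subset_iff)
qed

lemma noetherian_adjoin:
  assumes NA: "noetherian A"
  shows "noetherian (adjoin A g)"
  unfolding noetherian_def
proof (intro allI impI)
  fix F assume F: "F \<noteq> {} \<and> (\<forall>I\<in>F. ideal_in (adjoin A g) I)"
  then have ideal: "\<And>I. I \<in> F \<Longrightarrow> ideal_in (adjoin A g) I" by blast
  define H where "H = {lead_coeffs n I | n I. I \<in> F}"
  have "H \<noteq> {}" "\<And>L. L \<in> H \<Longrightarrow> ideal_in A L"
    unfolding H_def using F ideal_lead_coeffs by blast+
  from noetherianD[OF NA this] obtain M where "M \<in> H" and maxM: "\<forall>L\<in>H. M \<subseteq> L \<longrightarrow> L = M"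
    by (rule bexE)
  then obtain n0 I0 where I0: "I0 \<in> F" "M = lead_coeffs n0 I0" unfolding H_def by blast
  have "\<exists>I1\<in>F. I0 \<subseteq> I1 \<and> (\<forall>I\<in>F. I1 \<subseteq> I \<longrightarrow> (\<forall>n<n0. lead_coeffs n I = lead_coeffs n I1))"
    by (rule noetherian_stabilize[OF NA _ _ I0(1)]) (use ideal_lead_coeffs ideal lead_coeffs_mono in auto)
  then obtain I1 where I1: "I1 \<in> F" "I0 \<subseteq> I1"
    and stable: "\<forall>I\<in>F. I1 \<subseteq> I \<longrightarrow> (\<forall>n<n0. lead_coeffs n I = lead_coeffs n I1)"
    by blast
  have high: "lead_coeffs n I = M" if "I \<in> F" "I1 \<subseteq> I" "n0 \<le> n" for I n
  proof -
    have "M \<subseteq> lead_coeffs n0 I" using I0(2) I1(2) that(2) lead_coeffs_mono by blast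
    also have "\<dots> \<subseteq> lead_coeffs n I" using lead_coeffs_mono_degree[OF ideal[OF that(1)] that(3)] .
    finally show ?thesis using maxM that(1) unfolding H_def by blast
  qed
  have "lead_coeffs n I \<subseteq> lead_coeffs n I1" if "I \<in> F" "I1 \<subseteq> I" for I n
  proof (cases "n < n0")
    case True
    then show ?thesis using stable that by blast
  next
    case False
    then show ?thesis using high[of I n] high[of I1 n] that I1(1) by simp
  qed
  then have "I \<subseteq> I1" if "I \<in> F" "I1 \<subseteq> I" for I
    using ideal_eq_of_lead_coeffs[OF ideal[OF I1(1)] ideal[OF that(1)]] that by blast
  then show "\<exists>M\<in>F. \<forall>I\<in>F. M \<subseteq> I \<longrightarrow> I = M" using I1(1) by blast
qed

end

lemma noetherian_ring_generated: "finite G \<Longrightarrow> noetherian (ring_generated G)"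
proof (induction G rule: finite_induct)
  case empty
  show ?case unfolding ring_generated_empty by (rule noetherian_range_of_int)
next
  case (insert g G)
  show ?case
    unfolding ring_generated_insert by (rule noetherian_adjoin[OF subring_ring_generated insert.IH])
qed

section \<open>Minimal primes and annihilators\<close>

text \<open>The unit ideal is not excluded; this does no harm below.\<close>
definition prime_ideal :: "'a::comm_ring_1 set \<Rightarrow> bool" where
  "prime_ideal Q \<longleftrightarrow> ideal_in UNIV Q \<and> (\<forall>a b. a * b \<in> Q \<longrightarrow> a \<in> Q \<or> b \<in> Q)"

definition radical_finite_prime_Inter :: "'a::comm_ring_1 set \<Rightarrow> bool" where
  "radical_finite_prime_Inter I \<longleftrightarrow>
     (\<exists>Qs. finite Qs \<and> (\<forall>Q\<in>Qs. prime_ideal Q \<and> I \<subseteq> Q) \<and> (\<forall>z. (\<forall>Q\<in>Qs. z \<in> Q) \<longrightarrow> (\<exists>n. z ^ n \<in> I)))"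

definition ideal_insert :: "'a::comm_ring_1 set \<Rightarrow> 'a \<Rightarrow> 'a set" where
  "ideal_insert M a = {m + u * a | m u. m \<in> M}"

lemma ideal_ideal_insert:
  assumes M: "ideal_in UNIV M"
  shows "ideal_in UNIV (ideal_insert M a)"
  unfolding ideal_in_def
proof (intro conjI ballI)
  have "0 + 0 * a \<in> ideal_insert M a" unfolding ideal_insert_def using M unfolding ideal_in_def by blast
  then show "0 \<in> ideal_insert M a" by simp
next
  fix x y assume "x \<in> ideal_insert M a" "y \<in> ideal_insert M a"
  then obtain m1 u1 m2 u2 where e: "x = m1 + u1 * a" "y = m2 + u2 * a" "m1 \<in> M" "m2 \<in> M"
    unfolding ideal_insert_def by blast
  have "m1 + m2 \<in> M" using e(3,4) M unfolding ideal_in_def by blast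
  moreover have "x + y = (m1 + m2) + (u1 + u2) * a" using e by (simp add: algebra_simps)
  ultimately show "x + y \<in> ideal_insert M a" unfolding ideal_insert_def by blast
next
  fix c x assume "x \<in> ideal_insert M a"
  then obtain m u where e: "x = m + u * a" "m \<in> M" unfolding ideal_insert_def by blast
  have "c * m \<in> M" using e(2) M unfolding ideal_in_def by blast
  moreover have "c * x = c * m + (c * u) * a" using e by (simp add: algebra_simps)
  ultimately show "c * x \<in> ideal_insert M a" unfolding ideal_insert_def by blast
qed simp

lemma subset_ideal_insert: "M \<subseteq> ideal_insert M a"
proof
  fix x assume "x \<in> M"
  then have "x + 0 * a \<in> ideal_insert M a" unfolding ideal_insert_def by blast
  then show "x \<in> ideal_insert M a" by simp
qed

lemma mem_ideal_insert:
  assumes "ideal_in UNIV M"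
  shows "a \<in> ideal_insert M a"
proof -
  have "0 + 1 * a \<in> ideal_insert M a" using assms unfolding ideal_insert_def ideal_in_def by blast
  then show ?thesis by simp
qed

lemma power_mem_of_ideal_insert:
  assumes M: "ideal_in UNIV M" and ab: "a * b \<in> M"
    and za: "z ^ n \<in> ideal_insert M a" and zb: "z ^ k \<in> ideal_insert M b"
  shows "z ^ (n + k) \<in> M"
proof -
  obtain m1 u where e1: "z ^ n = m1 + u * a" "m1 \<in> M" using za unfolding ideal_insert_def by blast
  obtain m2 v where e2: "z ^ k = m2 + v * b" "m2 \<in> M" using zb unfolding ideal_insert_def by blast
  have "z ^ (n + k) = (m2 + v * b) * m1 + (u * a) * m2 + (u * v) * (a * b)"
    by (simp add: power_add e1 e2 algebra_simps)
  moreover have "(m2 + v * b) * m1 \<in> M" "(u * a) * m2 \<in> M" "(u * v) * (a * b) \<in> M"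
    using e1(2) e2(2) ab M unfolding ideal_in_def by blast+
  then have "(m2 + v * b) * m1 + (u * a) * m2 + (u * v) * (a * b) \<in> M"
    using M unfolding ideal_in_def by blast
  ultimately show ?thesis by simp
qed

text \<open>Noetherian induction: a maximal counterexample M is not prime, and if a b \<in> M with
  a, b \<notin> M, the strictly larger ideals M + (a) and M + (b) are not counterexamples.\<close>
lemma noetherian_radical_finite_prime_Inter:
  assumes N: "noetherian (UNIV :: 'a::comm_ring_1 set)" and I: "ideal_in UNIV (I :: 'a set)"
  shows "radical_finite_prime_Inter I"
proof (rule ccontr)
  define F where "F = {J :: 'a set. ideal_in UNIV J \<and> \<not> radical_finite_prime_Inter J}"
  assume "\<not> radical_finite_prime_Inter I"
  then have "F \<noteq> {}" "\<And>J. J \<in> F \<Longrightarrow> ideal_in UNIV J" using I unfolding F_def by blast+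
  from noetherianD[OF N this] obtain M where "M \<in> F" and max: "\<forall>J\<in>F. M \<subseteq> J \<longrightarrow> J = M"
    by (rule bexE)
  then have M: "ideal_in UNIV M" "\<not> radical_finite_prime_Inter M" unfolding F_def by blast+
  have insert: "radical_finite_prime_Inter (ideal_insert M a)" if "a \<notin> M" for a
  proof (rule ccontr)
    assume "\<not> radical_finite_prime_Inter (ideal_insert M a)"
    then have "ideal_insert M a \<in> F" unfolding F_def using ideal_ideal_insert[OF M(1)] by blast
    then have "ideal_insert M a = M" using max subset_ideal_insert by blast
    then show False using mem_ideal_insert[OF M(1)] that by blast
  qed
  show False
  proof (cases "prime_ideal M")
    case True
    have "z ^ 1 \<in> M" if "\<forall>Q\<in>{M}. z \<in> Q" for z using that by simp
    then have "radical_finite_prime_Inter M"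
      unfolding radical_finite_prime_Inter_def using True by (intro exI[of _ "{M}"]) blast
    then show False using M(2) by simp
  next
    case False
    then obtain a b where ab: "a * b \<in> M" "a \<notin> M" "b \<notin> M"
      using M(1) unfolding prime_ideal_def by blast
    obtain Qa where Qa: "finite Qa" "\<forall>Q\<in>Qa. prime_ideal Q \<and> ideal_insert M a \<subseteq> Q"
      "\<forall>z. (\<forall>Q\<in>Qa. z \<in> Q) \<longrightarrow> (\<exists>n. z ^ n \<in> ideal_insert M a)"
      using insert[OF ab(2)] unfolding radical_finite_prime_Inter_def by blast
    obtain Qb where Qb: "finite Qb" "\<forall>Q\<in>Qb. prime_ideal Q \<and> ideal_insert M b \<subseteq> Q"
      "\<forall>z. (\<forall>Q\<in>Qb. z \<in> Q) \<longrightarrow> (\<exists>n. z ^ n \<in> ideal_insert M b)"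
      using insert[OF ab(3)] unfolding radical_finite_prime_Inter_def by blast
    have "\<exists>n. z ^ n \<in> M" if "\<forall>Q\<in>Qa \<union> Qb. z \<in> Q" for z
      using Qa(3) Qb(3) that power_mem_of_ideal_insert[OF M(1) ab(1)] by blast
    moreover have "\<forall>Q\<in>Qa \<union> Qb. prime_ideal Q \<and> M \<subseteq> Q"
      using Qa(2) Qb(2) subset_ideal_insert by blast
    ultimately have "radical_finite_prime_Inter M"
      unfolding radical_finite_prime_Inter_def using Qa(1) Qb(1)
      by (intro exI[of _ "Qa \<union> Qb"]) blast
    then show False using M(2) by simp
  qed
qed

lemma reduced_noetherian_zero_finite_prime_Inter:
  assumes "noetherian (UNIV :: 'a::comm_ring_1 set)" "reduced_ring TYPE('a)"
  shows "\<exists>Qs :: 'a set set. finite Qs \<and> (\<forall>Q\<in>Qs. prime_ideal Q) \<and> (\<forall>z. (\<forall>Q\<in>Qs. z \<in> Q) \<longrightarrow> z = 0)"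
proof -
  have "ideal_in UNIV {0::'a}" unfolding ideal_in_def by simp
  then have "radical_finite_prime_Inter {0::'a}" by (rule noetherian_radical_finite_prime_Inter[OF assms(1)])
  then obtain Qs :: "'a set set" where Qs: "finite Qs" "\<forall>Q\<in>Qs. prime_ideal Q \<and> {0} \<subseteq> Q"
    and radical: "\<forall>z. (\<forall>Q\<in>Qs. z \<in> Q) \<longrightarrow> (\<exists>n. z ^ n = 0)"
    unfolding radical_finite_prime_Inter_def by auto
  have "z = 0" if "\<forall>Q\<in>Qs. z \<in> Q" for z
    using radical that assms(2) unfolding reduced_ring_def by metis
  then show ?thesis using Qs by blast
qed

definition annihilator :: "'a::comm_ring_1 set \<Rightarrow> 'a set" where
  "annihilator Y = {a. \<forall>y\<in>Y. a * y = 0}"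

lemma ideal_annihilator: "ideal_in UNIV (annihilator Y)"
  unfolding ideal_in_def annihilator_def by (simp add: distrib_right mult.assoc)

lemma annihilator_eq_Inter_primes:
  assumes prime: "\<And>Q. Q \<in> Qs \<Longrightarrow> prime_ideal Q" and zero: "\<And>z. \<forall>Q\<in>Qs. z \<in> Q \<Longrightarrow> z = 0"
  shows "annihilator Y = \<Inter>{Q \<in> Qs. \<not> Y \<subseteq> Q}"
proof
  show "annihilator Y \<subseteq> \<Inter>{Q \<in> Qs. \<not> Y \<subseteq> Q}"
  proof
    fix a assume a: "a \<in> annihilator Y"
    have "a \<in> Q" if "Q \<in> Qs" "y \<in> Y" "y \<notin> Q" for Q y
    proof -
      have "a * y \<in> Q"
        using a prime[OF that(1)] that(2) unfolding annihilator_def prime_ideal_def ideal_in_def by simp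
      then show ?thesis using prime[OF that(1)] that(3) unfolding prime_ideal_def by blast
    qed
    then show "a \<in> \<Inter>{Q \<in> Qs. \<not> Y \<subseteq> Q}" by blast
  qed
  show "\<Inter>{Q \<in> Qs. \<not> Y \<subseteq> Q} \<subseteq> annihilator Y"
  proof
    fix a assume a: "a \<in> \<Inter>{Q \<in> Qs. \<not> Y \<subseteq> Q}"
    have "a * y \<in> Q" if "y \<in> Y" "Q \<in> Qs" for y Q
    proof (cases "Y \<subseteq> Q")
      case True
      then have "y \<in> Q" using that(1) by blast
      then show ?thesis using prime[OF that(2)] unfolding prime_ideal_def ideal_in_def by simp
    next
      case False
      then have "a \<in> Q" using a that(2) by blast
      then have "y * a \<in> Q" using prime[OF that(2)] unfolding prime_ideal_def ideal_in_def by simp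
      then show ?thesis by (simp add: mult.commute)
    qed
    then have "a * y = 0" if "y \<in> Y" for y using that by (intro zero) blast
    then show "a \<in> annihilator Y" unfolding annihilator_def by blast
  qed
qed

lemma finite_range_annihilator:
  assumes "noetherian (UNIV :: 'a::comm_ring_1 set)" "reduced_ring TYPE('a)"
  shows "finite (range (annihilator :: 'a set \<Rightarrow> 'a set))"
proof -
  obtain Qs :: "'a set set" where Qs: "finite Qs" "\<forall>Q\<in>Qs. prime_ideal Q"
    "\<forall>z. (\<forall>Q\<in>Qs. z \<in> Q) \<longrightarrow> z = 0"
    using reduced_noetherian_zero_finite_prime_Inter[OF assms] by (elim exE conjE)
  have "annihilator Y \<in> Inter ` Pow Qs" for Y :: "'a set"
  proof -
    have "annihilator Y = \<Inter>{Q \<in> Qs. \<not> Y \<subseteq> Q}"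
      using Qs(2,3) by (intro annihilator_eq_Inter_primes) auto
    moreover have "{Q \<in> Qs. \<not> Y \<subseteq> Q} \<in> Pow Qs" by blast
    ultimately show ?thesis by (simp add: rev_image_eqI)
  qed
  then have "range annihilator \<subseteq> Inter ` Pow Qs" by blast
  then show ?thesis using Qs(1) by (simp add: finite_subset)
qed

section \<open>The Knutson index\<close>

context
  fixes \<alpha> :: "'a::comm_ring_1 \<Rightarrow> int"
  assumes hom: "is_ring_hom_to_int \<alpha>"
begin

lemma int_hom_add: "\<alpha> (x + y) = \<alpha> x + \<alpha> y"
  using hom unfolding is_ring_hom_to_int_def by blast

lemma int_hom_mult: "\<alpha> (x * y) = \<alpha> x * \<alpha> y"
  using hom unfolding is_ring_hom_to_int_def by blast

lemma int_hom_diff: "\<alpha> (x - y) = \<alpha> x - \<alpha> y"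
  using int_hom_add[of "x - y" y] by simp

lemma int_hom_zero: "\<alpha> 0 = 0"
  using int_hom_diff[of 0 0] by simp

lemma int_hom_of_int: "\<alpha> (of_int n) = n"
proof -
  have one: "\<alpha> 1 = 1" using hom unfolding is_ring_hom_to_int_def by blast
  have "\<alpha> (of_nat k) = int k" for k by (induction k) (simp_all add: int_hom_add int_hom_zero one)
  moreover have "(of_int n :: 'a) = of_nat (nat n) - of_nat (nat (- n))" by (cases "n \<ge> 0") auto
  ultimately show ?thesis by (simp add: int_hom_diff)
qed

lemma ideal_int_hom_generator:
  assumes J: "ideal_in UNIV J"
  shows "\<exists>t\<in>J. \<forall>a\<in>J. \<alpha> t dvd \<alpha> a"
proof -
  have "ideal_in UNIV (\<alpha> ` J)"
    unfolding ideal_in_def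
  proof (intro conjI ballI)
    have "0 \<in> J" using J unfolding ideal_in_def by blast
    then show "0 \<in> \<alpha> ` J" using int_hom_zero by (metis image_eqI)
  next
    fix u v assume "u \<in> \<alpha> ` J" "v \<in> \<alpha> ` J"
    then obtain a b where ab: "a \<in> J" "b \<in> J" "u = \<alpha> a" "v = \<alpha> b" by blast
    then have "a + b \<in> J" using J unfolding ideal_in_def by blast
    then show "u + v \<in> \<alpha> ` J" using ab int_hom_add[of a b] by (metis image_eqI)
  next
    fix z u assume "u \<in> \<alpha> ` J"
    then obtain a where a: "a \<in> J" "u = \<alpha> a" by blast
    then have "of_int z * a \<in> J" using J unfolding ideal_in_def by blast
    moreover have "\<alpha> (of_int z * a) = z * u" using a(2) by (simp add: int_hom_mult int_hom_of_int)
    ultimately show "z * u \<in> \<alpha> ` J" by (metis image_eqI)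
  qed simp
  then obtain g where g: "\<forall>n. n \<in> \<alpha> ` J \<longleftrightarrow> g dvd n" using int_ideal_principal by blast
  then have "g \<in> \<alpha> ` J" by simp
  then obtain t where "t \<in> J" "\<alpha> t = g" by blast
  moreover have "g dvd \<alpha> a" if "a \<in> J" for a
  proof -
    have "\<alpha> a \<in> \<alpha> ` J" using that by (rule imageI)
    then show ?thesis using g by blast
  qed
  ultimately show ?thesis by blast
qed

lemma of_int_mult_cancel_right:
  assumes "\<alpha> r \<noteq> 0" "of_int n * r = of_int m * r"
  shows "n = m"
  using arg_cong[OF assms(2), of \<alpha>] assms(1) by (simp add: int_hom_mult int_hom_of_int)

text \<open>The difference of two such elements lies in ker \<alpha> and annihilates itself, so its square
  vanishes.\<close>
lemma int_hom_inj_on_annihilator_kernel: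
  assumes red: "reduced_ring TYPE('a)"
    and u: "u \<in> annihilator {p. \<alpha> p = 0}" and v: "v \<in> annihilator {p. \<alpha> p = 0}"
    and "\<alpha> u = \<alpha> v"
  shows "u = v"
proof -
  have "\<alpha> (u - v) = 0" using \<open>\<alpha> u = \<alpha> v\<close> by (simp add: int_hom_diff)
  then have "u * (u - v) = 0" "v * (u - v) = 0" using u v unfolding annihilator_def by blast+
  then have "(u - v) ^ 2 = 0" by (simp add: power2_eq_square algebra_simps)
  then show ?thesis using red unfolding reduced_ring_def by (metis eq_iff_diff_eq_0)
qed

end

lemma regular_mult_mem_annihilator_kernel:
  assumes "regular_elem \<alpha> r"
  shows "y * r \<in> annihilator {p. \<alpha> p = 0}"
proof -
  have kernel: "p * r = 0" if "\<alpha> p = 0" for p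
  proof -
    have "p * r = of_int (\<alpha> p) * r" using assms unfolding regular_elem_def by blast
    then show ?thesis using that by simp
  qed
  have "y * r * p = 0" if "\<alpha> p = 0" for p
  proof -
    have "y * r * p = y * (p * r)" by (simp add: mult_ac)
    also have "\<dots> = 0" using kernel[OF that] by simp
    finally show ?thesis .
  qed
  then show ?thesis unfolding annihilator_def by blast
qed

lemma int_multiples_of_int_mult: "int_multiples (of_int k * r) = {of_int n * r | n. k dvd n}"
proof (intro set_eqI iffI)
  fix y assume "y \<in> int_multiples (of_int k * r)"
  then obtain f where "y = of_int f * (of_int k * r)" unfolding int_multiples_def by blast
  then have "y = of_int (k * f) * r" by (simp add: mult_ac)
  then show "y \<in> {of_int n * r | n. k dvd n}" using dvd_triv_left by blast
next
  fix y assume "y \<in> {of_int n * r | n. k dvd n}"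
  then obtain f where "y = of_int (k * f) * r" by (auto elim: dvdE)
  then have "y = of_int f * (of_int k * r)" by (simp add: mult_ac)
  then show "y \<in> int_multiples (of_int k * r)" unfolding int_multiples_def by blast
qed

lemma int_multiples_of_nat_mult_inj:
  fixes \<alpha> :: "'a::comm_ring_1 \<Rightarrow> int"
  assumes hom: "is_ring_hom_to_int \<alpha>" and "\<alpha> r \<noteq> 0"
    and eq: "int_multiples (of_nat k * r) = int_multiples (of_nat l * r)"
  shows "k = l"
proof -
  have "int l dvd int k" if "int_multiples (of_nat k * r) \<subseteq> int_multiples (of_nat l * r)" for k l
  proof -
    have "of_int (int k) * r \<in> int_multiples (of_int (int k) * r)"
      unfolding int_multiples_of_int_mult using dvd_refl by blast
    then have "of_int (int k) * r \<in> int_multiples (of_int (int l) * r)" using that by auto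
    then obtain n where "of_int (int k) * r = of_int n * r" "int l dvd n"
      unfolding int_multiples_of_int_mult by blast
    then show ?thesis using of_int_mult_cancel_right[OF hom \<open>\<alpha> r \<noteq> 0\<close>] by metis
  qed
  then show ?thesis using eq by (simp add: dvd_antisym)
qed

lemma knutson_index_eqI:
  fixes \<alpha> :: "'a::comm_ring_1 \<Rightarrow> int"
  assumes hom: "is_ring_hom_to_int \<alpha>" and "\<alpha> r \<noteq> 0"
    and multiples: "\<And>n. (\<exists>a. a * x = of_int n * r) \<longleftrightarrow> m dvd n"
  shows "knutson_index r x = nat \<bar>m\<bar>"
proof -
  have "y \<in> {a * x | a. True} \<inter> int_multiples r \<longleftrightarrow> y \<in> {of_int n * r | n. m dvd n}" for y
  proof
    assume "y \<in> {a * x | a. True} \<inter> int_multiples r"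
    then obtain a n where "y = a * x" "y = of_int n * r" unfolding int_multiples_def by blast
    then show "y \<in> {of_int n * r | n. m dvd n}" using multiples by blast
  next
    assume "y \<in> {of_int n * r | n. m dvd n}"
    then obtain n where n: "y = of_int n * r" "m dvd n" by blast
    then obtain a where "a * x = of_int n * r" using multiples by blast
    then have "y = a * x" using n(1) by simp
    then show "y \<in> {a * x | a. True} \<inter> int_multiples r" unfolding int_multiples_def using n(1) by blast
  qed
  then have "{a * x | a. True} \<inter> int_multiples r = {of_int n * r | n. m dvd n}" by blast
  also have "\<dots> = int_multiples (of_nat (nat \<bar>m\<bar>) * r)"
    using int_multiples_of_int_mult[of "\<bar>m\<bar>" r] by simp
  finally show ?thesis
    unfolding knutson_index_def
    using int_multiples_of_nat_mult_inj[OF hom \<open>\<alpha> r \<noteq> 0\<close>] by (intro the_equality) auto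
qed

lemma knutson_subindex_eqI:
  assumes "s \<in> S" "s * x = of_int n * r" "\<bar>n\<bar> = \<bar>m\<bar>"
    and multiple: "\<And>s' n'. s' * x = of_int n' * r \<Longrightarrow> m dvd n'"
  shows "knutson_subindex S r x = enat (nat \<bar>m\<bar>)"
proof -
  have s: "s \<in> S_part S r x" using assms(1,2) unfolding S_part_def int_multiples_def by blast
  then have "n \<in> Ind S r x" using assms(2) unfolding Ind_def by blast
  then have "Gcd (Ind S r x) dvd \<bar>m\<bar>" using assms(3) by (metis Gcd_dvd dvd_abs_iff)
  moreover have "\<bar>m\<bar> dvd Gcd (Ind S r x)"
    using multiple unfolding Ind_def dvd_Gcd_iff by auto
  ultimately have "Gcd (Ind S r x) = \<bar>m\<bar>" by (simp add: zdvd_antisym_nonneg)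
  then show ?thesis unfolding knutson_subindex_def using s by auto
qed

lemma multipliers_principal: "\<exists>m. \<forall>n. (\<exists>a. a * x = of_int n * r) \<longleftrightarrow> m dvd n"
proof -
  have "ideal_in UNIV {n. \<exists>a. a * x = of_int n * r}"
    unfolding ideal_in_def
  proof (intro conjI ballI)
    fix n n' assume "n \<in> {n. \<exists>a. a * x = of_int n * r}" "n' \<in> {n. \<exists>a. a * x = of_int n * r}"
    then obtain a a' where "a * x = of_int n * r" "a' * x = of_int n' * r" by blast
    then have "(a + a') * x = of_int (n + n') * r" by (simp add: algebra_simps)
    then show "n + n' \<in> {n. \<exists>a. a * x = of_int n * r}" by blast
  next
    fix z n assume "n \<in> {n. \<exists>a. a * x = of_int n * r}"
    then obtain a where "a * x = of_int n * r" by blast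
    then have "(of_int z * a) * x = of_int (z * n) * r" by (simp add: mult.assoc)
    then show "z * n \<in> {n. \<exists>a. a * x = of_int n * r}" by blast
  qed (auto intro: exI[of _ 0])
  then show ?thesis using int_ideal_principal by blast
qed

lemma annihilator_image_mult_iff: "a \<in> annihilator ((*) x ` Y) \<longleftrightarrow> a * x \<in> annihilator Y"
  unfolding annihilator_def by (simp add: mult.assoc)

text \<open>From a x = m r with \<alpha> t dividing \<alpha> a, pass to t k x = m r and then to
  c = gcd k (\<alpha> r), which keeps t c x in \<int> r and its multiplier a divisor of m.\<close>
lemma short_multiplier:
  fixes \<alpha> :: "'a::comm_ring_1 \<Rightarrow> int"
  assumes hom: "is_ring_hom_to_int \<alpha>" and reg: "regular_elem \<alpha> r" and red: "reduced_ring TYPE('a)"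
    and t: "t * x \<in> annihilator {p. \<alpha> p = 0}"
    and a: "a * x = of_int m * r" and "\<alpha> t dvd \<alpha> a"
  shows "\<exists>c n. \<bar>c\<bar> \<le> \<bar>\<alpha> r\<bar> \<and> t * of_int c * x = of_int n * r \<and> n dvd m"
proof -
  note inj = int_hom_inj_on_annihilator_kernel[OF hom red]
  note mult = int_hom_mult[OF hom] and of_int = int_hom_of_int[OF hom]
  have ar: "\<alpha> r \<noteq> 0" using reg unfolding regular_elem_def by blast
  have t_ann: "t * of_int c * x \<in> annihilator {p. \<alpha> p = 0}" for c
    using t ideal_annihilator unfolding ideal_in_def by (metis UNIV_I mult.assoc mult.commute)
  obtain k where k: "\<alpha> a = \<alpha> t * k" using \<open>\<alpha> t dvd \<alpha> a\<close> by (elim dvdE)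
  have tk: "t * of_int k * x = of_int m * r"
  proof (rule inj[OF t_ann regular_mult_mem_annihilator_kernel[OF reg]])
    show "\<alpha> (t * of_int k * x) = \<alpha> (of_int m * r)"
      using arg_cong[OF a, of \<alpha>] k by (simp add: mult of_int)
  qed
  have tr: "t * of_int (\<alpha> r) * x = of_int (\<alpha> (t * x)) * r"
    by (rule inj[OF t_ann regular_mult_mem_annihilator_kernel[OF reg]]) (simp add: mult of_int)
  define c where "c = gcd k (\<alpha> r)"
  obtain u v where uv: "u * k + v * \<alpha> r = c" unfolding c_def using bezout_int by blast
  define n where "n = u * m + v * \<alpha> (t * x)"
  have tc: "t * of_int c * x = of_int n * r"
  proof -
    have "t * of_int c * x = of_int u * (t * of_int k * x) + of_int v * (t * of_int (\<alpha> r) * x)"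
      unfolding uv[symmetric] by (simp add: algebra_simps)
    then show ?thesis unfolding tk tr n_def by (simp add: algebra_simps)
  qed
  obtain e where e: "k = c * e" unfolding c_def by (rule dvdE[OF gcd_dvd1])
  have "of_int m * r = of_int e * (t * of_int c * x)" unfolding tk[symmetric] e by (simp add: mult_ac)
  then have "of_int m * r = of_int (e * n) * r" unfolding tc by (simp add: mult.assoc)
  then have "n dvd m" using of_int_mult_cancel_right[OF hom ar] by (metis dvd_triv_right)
  moreover have "\<bar>c\<bar> \<le> \<bar>\<alpha> r\<bar>" unfolding c_def using ar by (simp add: zdvd_imp_le)
  ultimately show ?thesis using tc by blast
qed

lemma knutson_index_eq_subindex:
  fixes \<alpha> :: "'a::comm_ring_1 \<Rightarrow> int"
  assumes hom: "is_ring_hom_to_int \<alpha>" and reg: "regular_elem \<alpha> r" and red: "reduced_ring TYPE('a)"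
    and t: "t * x \<in> annihilator {p. \<alpha> p = 0}"
    and t_min: "\<And>a. a * x \<in> annihilator {p. \<alpha> p = 0} \<Longrightarrow> \<alpha> t dvd \<alpha> a"
    and S: "\<And>c. \<bar>c\<bar> \<le> \<bar>\<alpha> r\<bar> \<Longrightarrow> t * of_int c \<in> S"
  shows "enat (knutson_index r x) = knutson_subindex S r x"
proof -
  have ar: "\<alpha> r \<noteq> 0" using reg unfolding regular_elem_def by blast
  from multipliers_principal obtain m where multiples: "\<forall>n. (\<exists>a. a * x = of_int n * r) \<longleftrightarrow> m dvd n"
    by (rule exE)
  then have "\<exists>a. a * x = of_int m * r" by simp
  then obtain a where a: "a * x = of_int m * r" by (rule exE)
  then have "a * x \<in> annihilator {p. \<alpha> p = 0}"
    using regular_mult_mem_annihilator_kernel[OF reg] by simp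
  from short_multiplier[OF hom reg red t a t_min[OF this]]
  obtain c n where c: "\<bar>c\<bar> \<le> \<bar>\<alpha> r\<bar>" and n: "t * of_int c * x = of_int n * r" "n dvd m"
    by blast
  have multiple: "m dvd n'" if "s' * x = of_int n' * r" for s' n'
  proof -
    have "\<exists>a. a * x = of_int n' * r" using that by blast
    then show ?thesis using multiples by simp
  qed
  have "\<bar>n\<bar> = \<bar>m\<bar>" using n(2) multiple[OF n(1)] by (rule zdvd_antisym_abs)
  then have "knutson_subindex S r x = enat (nat \<bar>m\<bar>)"
    by (rule knutson_subindex_eqI[OF S[OF c] n(1) _ multiple])
  moreover have "knutson_index r x = nat \<bar>m\<bar>"
    using multiples by (intro knutson_index_eqI[OF hom ar]) simp
  ultimately show ?thesis by simp
qed

theorem proposition2p6: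
  fixes \<alpha> :: "'a::comm_ring_1 \<Rightarrow> int" and r :: 'a
  assumes "finitely_generated_ring TYPE('a)"
    and "reduced_ring TYPE('a)"
    and "is_ring_hom_to_int \<alpha>"
    and "regular_elem \<alpha> r"
  shows "\<exists>S::'a set. finite S \<and>
           (\<forall>x. enat (knutson_index r x) = knutson_subindex S r x)"
proof -
  obtain G :: "'a set" where "finite G" "ring_generated G = UNIV"
    using assms(1) unfolding finitely_generated_ring_def by blast
  then have "noetherian (UNIV :: 'a set)" using noetherian_ring_generated by metis
  then have fin: "finite (range (annihilator :: 'a set \<Rightarrow> 'a set))"
    using assms(2) by (rule finite_range_annihilator)
  have "\<forall>J\<in>range annihilator. \<exists>t\<in>J. \<forall>a\<in>J. \<alpha> t dvd \<alpha> a"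
    using ideal_int_hom_generator[OF assms(3) ideal_annihilator] by blast
  then obtain gen where gen: "\<And>Y. gen (annihilator Y) \<in> annihilator Y"
    "\<And>Y a. a \<in> annihilator Y \<Longrightarrow> \<alpha> (gen (annihilator Y)) dvd \<alpha> a"
    by (metis rangeI)
  define S where "S = (\<lambda>(J, c). gen J * of_int c) ` (range annihilator \<times> {- \<bar>\<alpha> r\<bar>..\<bar>\<alpha> r\<bar>})"
  have "enat (knutson_index r x) = knutson_subindex S r x" for x
  proof (rule knutson_index_eq_subindex[OF assms(3,4,2)])
    let ?J = "annihilator ((*) x ` {p. \<alpha> p = 0})"
    show "gen ?J * x \<in> annihilator {p. \<alpha> p = 0}"
      using gen(1) annihilator_image_mult_iff by blast
    show "\<alpha> (gen ?J) dvd \<alpha> a" if "a * x \<in> annihilator {p. \<alpha> p = 0}" for a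
      using gen(2) that annihilator_image_mult_iff by blast
    show "gen ?J * of_int c \<in> S" if "\<bar>c\<bar> \<le> \<bar>\<alpha> r\<bar>" for c
      unfolding S_def using that by (intro rev_image_eqI[of "(?J, c)"]) auto
  qed
  moreover have "finite S" unfolding S_def using fin by simp
  ultimately show ?thesis by blast
qed

end
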